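(* Consider NSGA-III (as defined in the context) with parameter $\varepsilon_{\mathrm{nad}}\ge f_{\max}$, run on an arbitrary function $f:\{0,1\}^n\to\mathbb N_0^m$, with any population size $\mu$, any reference set $\mathcal R_p$, any initial population and any rule for choosing the extreme points. Then in every generation $t$, after the normalization step, for every $x\in R_t$ and every $j\in[m]$ we have $0\le f^n_j(x)\le 1$ and $y^{\mathrm{nad}}_j-y^{\min}_j\le f_{\max}$.
   Context: Let $f=(f_1,\dots,f_m):\{0,1\}^n\to\mathbb N_0^m$ be an $m$-objective function to be maximized, and $f_{\max}:=\max\{f_j(x): x\in\{0,1\}^n, j\in[m]\}$, assumed $\ge 1$. For $x,y\in\{0,1\}^n$: $x\succeq y$ ($x$ weakly dominates $y$) iff $f_j(x)\ge f_j(y)$ for all $j$; $x\succ y$ iff $x\succeq y$ and $f_j(x)>f_j(y)$ for some $j$; $x,y$ are incomparable if neither $x\succeq y$ nor $y\succeq x$. For $p\in\mathbb N$ the reference set is $\mathcal R_p=\{(a_1/p,\dots,a_m/p): (a_1,\dots,a_m)\in\mathbb N_0^m,\ \sum_i a_i=p\}$. NSGA-III with population size $\mu$, threshold $\varepsilon_{\mathrm{nad}}>0$ and reference set $\mathcal R_p$: start with a population $P_0$ (a multiset of $\mu$ bit strings; arbitrary), $E_0=\{(-\infty,\dots,-\infty)\}$, $y^{\max}=(-\infty,\dots,-\infty)$, $y^{\min}=(+\infty,\dots,+\infty)$. In generation $t=0,1,2,\dots$: (1) Offspring: $Q_t$ consists of $\mu$ offspring, each created independently by choosing a parent uniformly at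 random from $P_t$ and flipping each of its bits independently with probability $1/n$. (2) Sorting: $R_t=P_t\cup Q_t$ (multiset of size $2\mu$) is partitioned into layers $F^1_t,\dots,F^k_t$, where $F^1_t$ consists of the members of $R_t$ not dominated (w.r.t. $\succ$) by any member of $R_t$, and $F^i_t$ consists of the members of $R_t\setminus(F^1_t\cup\dots\cup F^{i-1}_t)$ not dominated by any member of that set. Let $i^*$ be the index with $\sum_{i<i^*}|F^i_t|<\mu\le\sum_{i\le i^*}|F^i_t|$, and $Y_t=\bigcup_{i<i^*}F^i_t$. (3) Normalization: for each $j$, set $y^{\min}_j\leftarrow\min(y^{\min}_j,\min_{x\in R_t}f_j(x))$ and $y^{\max}_j\leftarrow\max(y^{\max}_j,\max_{x\in F^1_t}f_j(x))$ (so these are running extremes over all generations so far), and choose an extreme point $e^{(j)}\in f(Y_t\cup F^{i^*}_t)\cup E_t$ by some fixed rule (originally via an achievement scalarization function); set $E_{t+1}=\{e^{(1)},\dots,e^{(m)}\}$. If $e^{(1)},\dots,e^{(m)}$ are linearly independent, let $H$ be the affine hyperplane through them; if for every $j$ the hyperplane $H$ meets the $j$-th coordinate axis in exactly one point $I_j u_j$ ($u_j$ the $j$-th unit vector) with $\varepsilon_{\mathrm{nad}}\le I_j\le y^{\max}_j$, set $y^{\mathrm{nad}}_j=I_j$ for all $j$. Otherwise (including linear dependence) set $y^{\mathrm{nad}}_j=\max_{x\in F^1_t}f_j(x)$ for all $j$. Afterwards, for every $j$ with $y^{\mathrm{nad}}_j<y^{\min}_j+\varepsilon_{\mathrm{nad}}$,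 reset $y^{\mathrm{nad}}_j=\max_{x\in R_t}f_j(x)$. The normalized objectives are $f^n_j(x)=(f_j(x)-y^{\min}_j)/(y^{\mathrm{nad}}_j-y^{\min}_j)$ (with the convention $f^n_j(x):=0$ if the denominator is $0$), $f^n=(f^n_1,\dots,f^n_m)$. (4) Association: each $x\in Y_t\cup F^{i^*}_t$ is associated with a reference point $\mathrm{rp}(x)\in\mathcal R_p$ minimizing the Euclidean distance from $f^n(x)$ to the line $\{\lambda r:\lambda\in\mathbb R\}$ (equivalently, minimizing the angle between $f^n(x)$ and $r$); ties are broken by a deterministic rule depending only on $f^n(x)$. (5) Selection: let $\rho_r=|\{x\in Y_t:\mathrm{rp}(x)=r\}|$ for $r\in\mathcal R_p$, $\tilde F=\emptyset$, $R'=\mathcal R_p$. Repeat: choose $r\in R'$ with minimal $\rho_r$ (ties uniformly at random); if some $x\in F^{i^*}_t\setminus\tilde F$ has $\mathrm{rp}(x)=r$, add to $\tilde F$ such an $x$ minimizing the distance between $f^n(x)$ and $r$ (ties uniformly at random), increase $\rho_r$ by one, and stop as soon as $|Y_t|+|\tilde F|=\mu$; otherwise remove $r$ from $R'$. Set $P_{t+1}=Y_t\cup\tilde F$. *)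

theory Defs
  imports "HOL-Analysis.Analysis" "HOL-Library.Multiset"
begin

text \<open>Bit strings are boolean lists (of length n); objectives are indexed by a finite type 'm
  (so m = CARD('m)); an m-objective function is f :: bits => 'm => nat.\<close>

type_synonym bits = "bool list"

definition fmax :: "nat \<Rightarrow> (bits \<Rightarrow> 'm::finite \<Rightarrow> nat) \<Rightarrow> nat" where
  "fmax n f = Max {f x j | x j. length x = n}"

definition weakly_dominates :: "(bits \<Rightarrow> 'm::finite \<Rightarrow> nat) \<Rightarrow> bits \<Rightarrow> bits \<Rightarrow> bool" where
  "weakly_dominates f x y \<longleftrightarrow> (\<forall>j. f y j \<le> f x j)"

definition dominates :: "(bits \<Rightarrow> 'm::finite \<Rightarrow> nat) \<Rightarrow> bits \<Rightarrow> bits \<Rightarrow> bool" where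
  "dominates f x y \<longleftrightarrow> weakly_dominates f x y \<and> (\<exists>j. f y j < f x j)"

definition nondom :: "(bits \<Rightarrow> 'm::finite \<Rightarrow> nat) \<Rightarrow> bits multiset \<Rightarrow> bits multiset" where
  "nondom f R = filter_mset (\<lambda>x. \<not> (\<exists>y\<in>#R. dominates f y x)) R"

fun rest :: "(bits \<Rightarrow> 'm::finite \<Rightarrow> nat) \<Rightarrow> bits multiset \<Rightarrow> nat \<Rightarrow> bits multiset" where
  "rest f R 0 = R"
| "rest f R (Suc i) = rest f R i - nondom f (rest f R i)"

text \<open>layer f R i is the layer F^(i+1) (0-indexed).\<close>
definition layer :: "(bits \<Rightarrow> 'm::finite \<Rightarrow> nat) \<Rightarrow> bits multiset \<Rightarrow> nat \<Rightarrow> bits multiset" where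
  "layer f R i = nondom f (rest f R i)"

text \<open>0-indexed critical layer index i* - 1.\<close>
definition crit_index :: "(bits \<Rightarrow> 'm::finite \<Rightarrow> nat) \<Rightarrow> nat \<Rightarrow> bits multiset \<Rightarrow> nat" where
  "crit_index f \<mu> R = (LEAST k. \<mu> \<le> (\<Sum>i\<le>k. size (layer f R i)))"

definition Ypart :: "(bits \<Rightarrow> 'm::finite \<Rightarrow> nat) \<Rightarrow> nat \<Rightarrow> bits multiset \<Rightarrow> bits multiset" where
  "Ypart f \<mu> R = (\<Sum>i<crit_index f \<mu> R. layer f R i)"

definition Fcrit :: "(bits \<Rightarrow> 'm::finite \<Rightarrow> nat) \<Rightarrow> nat \<Rightarrow> bits multiset \<Rightarrow> bits multiset" where
  "Fcrit f \<mu> R = layer f R (crit_index f \<mu> R)"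

definition Rpop :: "(nat \<Rightarrow> bits multiset) \<Rightarrow> (nat \<Rightarrow> bits multiset) \<Rightarrow> nat \<Rightarrow> bits multiset" where
  "Rpop P Q t = P t + Q t"

definition ymin :: "(bits \<Rightarrow> 'm::finite \<Rightarrow> nat) \<Rightarrow> (nat \<Rightarrow> bits multiset) \<Rightarrow> (nat \<Rightarrow> bits multiset)
    \<Rightarrow> nat \<Rightarrow> 'm \<Rightarrow> real" where
  "ymin f P Q t j = Min {real (f x j) | x s. s \<le> t \<and> x \<in># Rpop P Q s}"

definition ymax :: "(bits \<Rightarrow> 'm::finite \<Rightarrow> nat) \<Rightarrow> (nat \<Rightarrow> bits multiset) \<Rightarrow> (nat \<Rightarrow> bits multiset)
    \<Rightarrow> nat \<Rightarrow> 'm \<Rightarrow> real" where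
  "ymax f P Q t j = Max {real (f x j) | x s. s \<le> t \<and> x \<in># nondom f (Rpop P Q s)}"

definition fvec :: "(bits \<Rightarrow> 'm::finite \<Rightarrow> nat) \<Rightarrow> bits \<Rightarrow> real^'m" where
  "fvec f x = (\<chi> j. real (f x j))"

text \<open>Extreme points: ext t j is e^(j) chosen in generation t. A point is an element of
  real^'m option, where None stands for the point (-inf,...,-inf).
  Eset ext t is the set E_t.\<close>
definition Eset :: "(nat \<Rightarrow> 'm \<Rightarrow> (real^'m) option) \<Rightarrow> nat \<Rightarrow> (real^'m) option set" where
  "Eset ext t = (if t = 0 then {None} else range (ext (t - 1)))"

definition icpt :: "('m::finite \<Rightarrow> real^'m) \<Rightarrow> 'm \<Rightarrow> real" where
  "icpt e j = (THE l. l *\<^sub>R axis j (1::real) \<in> affine hull (range e))"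

definition hyper_case :: "real \<Rightarrow> ('m::finite \<Rightarrow> real) \<Rightarrow> ('m \<Rightarrow> (real^'m) option) \<Rightarrow> bool" where
  "hyper_case eps ymx E \<longleftrightarrow> (\<forall>i. E i \<noteq> None) \<and>
     (let e = (\<lambda>i. the (E i)) in
        inj e \<and> independent (range e) \<and>
        (\<forall>j. (\<exists>!l. l *\<^sub>R axis j (1::real) \<in> affine hull (range e))
             \<and> eps \<le> icpt e j \<and> icpt e j \<le> ymx j))"

definition ynad :: "(bits \<Rightarrow> 'm::finite \<Rightarrow> nat) \<Rightarrow> real \<Rightarrow> (nat \<Rightarrow> bits multiset) \<Rightarrow> (nat \<Rightarrow> bits multiset)
    \<Rightarrow> (nat \<Rightarrow> 'm \<Rightarrow> (real^'m) option) \<Rightarrow> nat \<Rightarrow> 'm \<Rightarrow> real" where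
  "ynad f eps P Q ext t j =
     (let y0 = (if hyper_case eps (ymax f P Q t) (ext t)
                then icpt (\<lambda>i. the (ext t i)) j
                else Max {real (f x j) | x. x \<in># nondom f (Rpop P Q t)})
      in if y0 < ymin f P Q t j + eps then Max {real (f x j) | x. x \<in># Rpop P Q t} else y0)"

definition fnorm :: "(bits \<Rightarrow> 'm::finite \<Rightarrow> nat) \<Rightarrow> real \<Rightarrow> (nat \<Rightarrow> bits multiset) \<Rightarrow> (nat \<Rightarrow> bits multiset)
    \<Rightarrow> (nat \<Rightarrow> 'm \<Rightarrow> (real^'m) option) \<Rightarrow> nat \<Rightarrow> bits \<Rightarrow> 'm \<Rightarrow> real" where
  "fnorm f eps P Q ext t x j =
     (let d = ynad f eps P Q ext t j - ymin f P Q t j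
      in if d = 0 then 0 else (real (f x j) - ymin f P Q t j) / d)"

definition fnvec :: "(bits \<Rightarrow> 'm::finite \<Rightarrow> nat) \<Rightarrow> real \<Rightarrow> (nat \<Rightarrow> bits multiset) \<Rightarrow> (nat \<Rightarrow> bits multiset)
    \<Rightarrow> (nat \<Rightarrow> 'm \<Rightarrow> (real^'m) option) \<Rightarrow> nat \<Rightarrow> bits \<Rightarrow> real^'m" where
  "fnvec f eps P Q ext t x = (\<chi> j. fnorm f eps P Q ext t x j)"

definition refset :: "nat \<Rightarrow> (real^'m::finite) set" where
  "refset p = {r. \<exists>a::'m \<Rightarrow> nat. (\<Sum>i\<in>UNIV. a i) = p \<and> r = (\<chi> i. real (a i) / real p)}"

definition line_dist :: "real^'m::finite \<Rightarrow> real^'m \<Rightarrow> real" where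
  "line_dist v r = infdist v (range (\<lambda>l::real. l *\<^sub>R r))"

definition assoc_rule :: "nat \<Rightarrow> (real^'m::finite \<Rightarrow> real^'m) \<Rightarrow> bool" where
  "assoc_rule p A \<longleftrightarrow> (\<forall>v. A v \<in> refset p \<and> (\<forall>r\<in>refset p. line_dist v (A v) \<le> line_dist v r))"

text \<open>The niching loop (step 5) as a nondeterministic transition system; random tie breaks
  correspond to nondeterministic choices. State: counts rho, chosen multiset Ft, remaining R'.
  K = mu - |Y_t| is the number of individuals to pick.\<close>
inductive niching :: "nat \<Rightarrow> bits multiset \<Rightarrow> (bits \<Rightarrow> real^'m::finite) \<Rightarrow> (bits \<Rightarrow> real)
    \<Rightarrow> (real^'m) set \<Rightarrow> (real^'m \<Rightarrow> nat) \<Rightarrow> (real^'m \<Rightarrow> nat) \<Rightarrow> bits multiset \<Rightarrow> (real^'m) set \<Rightarrow> bool"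
  for K Fc rp d Rp rho0 where
  init: "niching K Fc rp d Rp rho0 rho0 {#} Rp"
| add: "niching K Fc rp d Rp rho0 rho Ft R' \<Longrightarrow> size Ft < K \<Longrightarrow> r \<in> R' \<Longrightarrow>
        (\<forall>r'\<in>R'. rho r \<le> rho r') \<Longrightarrow> x \<in># Fc - Ft \<Longrightarrow> rp x = r \<Longrightarrow>
        (\<forall>y\<in>#Fc - Ft. rp y = r \<longrightarrow> d x \<le> d y) \<Longrightarrow>
        niching K Fc rp d Rp rho0 (rho(r := Suc (rho r))) (Ft + {#x#}) R'"
| remove: "niching K Fc rp d Rp rho0 rho Ft R' \<Longrightarrow> size Ft < K \<Longrightarrow> r \<in> R' \<Longrightarrow>
        (\<forall>r'\<in>R'. rho r \<le> rho r') \<Longrightarrow> \<not> (\<exists>x\<in>#Fc - Ft. rp x = r) \<Longrightarrow>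
        niching K Fc rp d Rp rho0 rho Ft (R' - {r})"

text \<open>The offspring multiset Q t may be any multiset of mu
  bit strings of length n (this is exactly the support of the offspring generation);
  the extreme points may be chosen arbitrarily among the admissible candidates.\<close>
definition nsga3_run :: "nat \<Rightarrow> (bits \<Rightarrow> 'm::finite \<Rightarrow> nat) \<Rightarrow> nat \<Rightarrow> nat \<Rightarrow> real
    \<Rightarrow> (real^'m \<Rightarrow> real^'m) \<Rightarrow> (nat \<Rightarrow> bits multiset) \<Rightarrow> (nat \<Rightarrow> bits multiset)
    \<Rightarrow> (nat \<Rightarrow> 'm \<Rightarrow> (real^'m) option) \<Rightarrow> bool" where
  "nsga3_run n f \<mu> p eps A P Q ext \<longleftrightarrow>
     1 \<le> \<mu> \<and> 1 \<le> p \<and>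
     size (P 0) = \<mu> \<and> (\<forall>x\<in>#P 0. length x = n) \<and>
     (\<forall>t. size (Q t) = \<mu> \<and> (\<forall>x\<in>#Q t. length x = n)) \<and>
     (\<forall>t j. ext t j \<in> Some ` fvec f ` set_mset (Ypart f \<mu> (Rpop P Q t) + Fcrit f \<mu> (Rpop P Q t))
                      \<union> Eset ext t) \<and>
     (\<forall>t. let Y = Ypart f \<mu> (Rpop P Q t);
             Fc = Fcrit f \<mu> (Rpop P Q t);
             rp = (\<lambda>x. A (fnvec f eps P Q ext t x));
             d = (\<lambda>x. line_dist (fnvec f eps P Q ext t x) (rp x))
          in \<exists>rho Ft R'. niching (\<mu> - size Y) Fc rp d (refset p)
                            (\<lambda>r. size (filter_mset (\<lambda>x. rp x = r) Y)) rho Ft R'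
                        \<and> size Ft = \<mu> - size Y \<and> P (Suc t) = Y + Ft)"

end

theory Submission
  imports Defs
begin

text \<open>Objective values are natural numbers, so the running minimum \<open>y\<^sup>m\<^sup>i\<^sup>n\<close> is nonnegative,
  and every value ever seen is at most \<open>f\<^sub>m\<^sub>a\<^sub>x\<close>, because all individuals of a run are bit strings
  of length \<open>n\<close>. If the nadir estimate is reset, it is the largest current value, which bounds
  every current value and is itself at most \<open>f\<^sub>m\<^sub>a\<^sub>x\<close>. Otherwise it is an intercept bounded by
  \<open>y\<^sup>m\<^sup>a\<^sup>x \<le> f\<^sub>m\<^sub>a\<^sub>x\<close> or a maximum over the first front, hence at most \<open>f\<^sub>m\<^sub>a\<^sub>x\<close>, while surviving the
  reset means it is at least \<open>y\<^sup>m\<^sup>i\<^sup>n + \<epsilon>\<^sub>n\<^sub>a\<^sub>d \<ge> f\<^sub>m\<^sub>a\<^sub>x\<close>.\<close>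

lemma Max_mset_image_le:
  fixes g :: "'a \<Rightarrow> 'b::linorder"
  assumes "M \<noteq> {#}" and "\<And>x. x \<in># M \<Longrightarrow> g x \<le> c"
  shows "Max {g x | x. x \<in># M} \<le> c"
proof -
  have "{g x | x. x \<in># M} = g ` set_mset M" by auto
  then show ?thesis using assms by simp
qed

lemma le_Max_mset_image:
  fixes g :: "'a \<Rightarrow> 'b::linorder"
  assumes "x \<in># M"
  shows "g x \<le> Max {g x | x. x \<in># M}"
proof -
  have "{g x | x. x \<in># M} = g ` set_mset M" by auto
  then show ?thesis using assms by simp
qed

lemma values_upto_eq:
  "{g x | x s. s \<le> (t::nat) \<and> x \<in># M s} = (\<Union>s\<le>t. g ` set_mset (M s))"
  by auto

lemma nondom_subset_eq: "nondom f R \<subseteq># R"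
  by (simp add: nondom_def)

lemma nondom_nonempty:
  fixes f :: "bits \<Rightarrow> 'm::finite \<Rightarrow> nat"
  assumes "R \<noteq> {#}"
  shows "nondom f R \<noteq> {#}"
proof -
  define g where "g x = (\<Sum>j\<in>UNIV. f x j)" for x
  have "Max (g ` set_mset R) \<in> g ` set_mset R" using assms by (intro Max_in) auto
  then obtain x where x: "x \<in># R" and x_is_max: "g x = Max (g ` set_mset R)" by auto
  have x_max: "g y \<le> g x" if "y \<in># R" for y
    using that unfolding x_is_max by simp
  have "\<not> dominates f y x" if "y \<in># R" for y
  proof
    assume "dominates f y x"
    then have "g x < g y"
      unfolding g_def dominates_def weakly_dominates_def by (intro sum_strict_mono_ex1) auto
    with x_max[OF that] show False by simp
  qed
  with x have "x \<in># nondom f R" by (auto simp: nondom_def)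
  then show ?thesis by auto
qed

lemma rest_subset_eq: "rest f R i \<subseteq># R"
  by (induction i) (auto intro: subset_mset.order_trans[OF diff_subset_eq_self])

lemma set_mset_layer_subset: "set_mset (layer f R i) \<subseteq> set_mset R"
  unfolding layer_def
  by (meson mset_subset_eqD nondom_subset_eq rest_subset_eq subset_mset.order_trans subsetI)

lemma set_mset_Ypart_subset: "set_mset (Ypart f \<mu> R) \<subseteq> set_mset R"
  unfolding Ypart_def using set_mset_layer_subset by (auto simp: set_mset_sum)

lemma set_mset_Fcrit_subset: "set_mset (Fcrit f \<mu> R) \<subseteq> set_mset R"
  unfolding Fcrit_def by (rule set_mset_layer_subset)

lemma niching_set_mset_subset:
  "niching K Fc rp d Rp rho0 rho Ft R' \<Longrightarrow> set_mset Ft \<subseteq> set_mset Fc"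
  by (induction rule: niching.induct) (auto dest: in_diffD)

lemma nsga3_run_next_population_subset:
  assumes "nsga3_run n f \<mu> p eps A P Q ext"
  shows "set_mset (P (Suc t)) \<subseteq> set_mset (Rpop P Q t)"
proof -
  from assms obtain rho Ft R' where
    "niching (\<mu> - size (Ypart f \<mu> (Rpop P Q t))) (Fcrit f \<mu> (Rpop P Q t))
       (\<lambda>x. A (fnvec f eps P Q ext t x))
       (\<lambda>x. line_dist (fnvec f eps P Q ext t x) (A (fnvec f eps P Q ext t x)))
       (refset p) (\<lambda>r. size {#x \<in># Ypart f \<mu> (Rpop P Q t). A (fnvec f eps P Q ext t x) = r#})
       rho Ft R'"
    and P_Suc: "P (Suc t) = Ypart f \<mu> (Rpop P Q t) + Ft"
    unfolding nsga3_run_def Let_def by meson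
  then have "set_mset Ft \<subseteq> set_mset (Rpop P Q t)"
    using niching_set_mset_subset set_mset_Fcrit_subset by blast
  then show ?thesis
    using P_Suc set_mset_Ypart_subset by fastforce
qed

lemma nsga3_run_length:
  assumes run: "nsga3_run n f \<mu> p eps A P Q ext" and "x \<in># Rpop P Q t"
  shows "length x = n"
proof -
  have Q: "\<forall>x\<in>#Q t. length x = n" for t
    using run by (simp add: nsga3_run_def)
  have "\<forall>x\<in>#P t. length x = n" for t
  proof (induction t)
    case 0
    then show ?case using run by (simp add: nsga3_run_def)
  next
    case (Suc t)
    then have "\<forall>x\<in>#Rpop P Q t. length x = n"
      using Q by (auto simp: Rpop_def)
    then show ?case using nsga3_run_next_population_subset[OF run] by blast
  qed
  with Q assms(2) show ?thesis by (auto simp: Rpop_def)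
qed

lemma fmax_ge:
  fixes f :: "bits \<Rightarrow> 'm::finite \<Rightarrow> nat"
  assumes "length x = n"
  shows "f x j \<le> fmax n f"
proof -
  have "{f x j | x j. length x = n} = (\<lambda>(x, j). f x j) ` ({x. length x = n} \<times> UNIV)"
    by auto
  moreover have "finite {xs :: bits. length xs = n}"
    using finite_lists_length_eq[of "UNIV :: bool set" n] by simp
  ultimately have "finite {f x j | x j. length x = n}" by simp
  then show ?thesis unfolding fmax_def using assms by (intro Max_ge) auto
qed

lemma ymin_le:
  assumes "x \<in># Rpop P Q t"
  shows "ymin f P Q t j \<le> real (f x j)"
  using assms unfolding ymin_def values_upto_eq by (intro Min_le) auto

lemma ymin_nonneg:
  assumes "Rpop P Q t \<noteq> {#}"
  shows "0 \<le> ymin f P Q t j"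
  using assms unfolding ymin_def values_upto_eq by (subst Min_ge_iff) auto

lemma ymax_le:
  assumes "Rpop P Q t \<noteq> {#}"
    and bound: "\<And>s x. s \<le> t \<Longrightarrow> x \<in># Rpop P Q s \<Longrightarrow> real (f x j) \<le> c"
  shows "ymax f P Q t j \<le> c"
proof -
  have "nondom f (Rpop P Q t) \<noteq> {#}" using assms(1) by (rule nondom_nonempty)
  moreover have "x \<in># Rpop P Q s" if "x \<in># nondom f (Rpop P Q s)" for x s
    using that nondom_subset_eq by (metis mset_subset_eqD)
  ultimately show ?thesis
    unfolding ymax_def values_upto_eq using bound by (subst Max_le_iff) auto
qed

lemma ynad_bounds:
  fixes f :: "bits \<Rightarrow> 'm::finite \<Rightarrow> nat"
  assumes x: "x \<in># Rpop P Q t"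
    and bound: "\<And>s x. s \<le> t \<Longrightarrow> x \<in># Rpop P Q s \<Longrightarrow> real (f x j) \<le> c"
    and "c \<le> eps"
  shows "real (f x j) \<le> ynad f eps P Q ext t j"
    and "ynad f eps P Q ext t j - ymin f P Q t j \<le> c"
proof -
  have ne: "Rpop P Q t \<noteq> {#}" using x by auto
  have ymin: "0 \<le> ymin f P Q t j" using ne by (rule ymin_nonneg)
  define y0 where "y0 = (if hyper_case eps (ymax f P Q t) (ext t)
    then icpt (\<lambda>i. the (ext t i)) j
    else Max {real (f x j) | x. x \<in># nondom f (Rpop P Q t)})"
  define current_max where "current_max = Max {real (f x j) | x. x \<in># Rpop P Q t}"
  have ynad:
    "ynad f eps P Q ext t j = (if y0 < ymin f P Q t j + eps then current_max else y0)"
    unfolding ynad_def y0_def current_max_def Let_def ..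
  have "y0 \<le> c"
  proof (cases "hyper_case eps (ymax f P Q t) (ext t)")
    case True
    then have "icpt (\<lambda>i. the (ext t i)) j \<le> ymax f P Q t j"
      unfolding hyper_case_def Let_def by blast
    moreover have "ymax f P Q t j \<le> c" using ymax_le[of P Q t f j c] ne bound by blast
    ultimately show ?thesis using True unfolding y0_def by simp
  next
    case False
    have "x \<in># Rpop P Q t" if "x \<in># nondom f (Rpop P Q t)" for x
      using that nondom_subset_eq by (metis mset_subset_eqD)
    then have "Max {real (f x j) | x. x \<in># nondom f (Rpop P Q t)} \<le> c"
      using Max_mset_image_le[of "nondom f (Rpop P Q t)" "\<lambda>x. real (f x j)" c]
        nondom_nonempty[OF ne] bound by blast
    with False show ?thesis unfolding y0_def by simp
  qed
  moreover have "current_max \<le> c"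
    unfolding current_max_def
    using Max_mset_image_le[of "Rpop P Q t" "\<lambda>x. real (f x j)" c] ne bound by blast
  moreover have "real (f x j) \<le> current_max"
    unfolding current_max_def using le_Max_mset_image[OF x, of "\<lambda>x. real (f x j)"] .
  moreover have "real (f x j) \<le> c" using bound x by blast
  ultimately show "real (f x j) \<le> ynad f eps P Q ext t j"
    and "ynad f eps P Q ext t j - ymin f P Q t j \<le> c"
    using ymin \<open>c \<le> eps\<close> unfolding ynad by auto
qed

lemma normalized_value_bounds:
  fixes lo v hi :: real
  assumes "lo \<le> v" and "v \<le> hi"
  shows "0 \<le> (if hi - lo = 0 then 0 else (v - lo) / (hi - lo))"
    and "(if hi - lo = 0 then 0 else (v - lo) / (hi - lo)) \<le> 1"
  using assms by (auto simp: divide_simps)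

lemma fnorm_bounds:
  assumes "ymin f P Q t j \<le> real (f x j)" and "real (f x j) \<le> ynad f eps P Q ext t j"
  shows "0 \<le> fnorm f eps P Q ext t x j" and "fnorm f eps P Q ext t x j \<le> 1"
  using normalized_value_bounds[OF assms] by (simp_all add: fnorm_def Let_def)

theorem lemma1:
  fixes n \<mu> p :: nat and f :: "bits \<Rightarrow> 'm::finite \<Rightarrow> nat" and eps :: real
    and A :: "real^'m \<Rightarrow> real^'m"
    and P Q :: "nat \<Rightarrow> bits multiset" and ext :: "nat \<Rightarrow> 'm \<Rightarrow> (real^'m) option"
  assumes "fmax n f \<ge> 1"
    and "eps \<ge> real (fmax n f)"
    and "assoc_rule p A"
    and "nsga3_run n f \<mu> p eps A P Q ext"
  shows "\<forall>t. \<forall>x\<in>#Rpop P Q t. \<forall>j.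
           0 \<le> fnorm f eps P Q ext t x j \<and> fnorm f eps P Q ext t x j \<le> 1 \<and>
           ynad f eps P Q ext t j - ymin f P Q t j \<le> real (fmax n f)"
proof (intro allI ballI)
  fix t x j
  assume x: "x \<in># Rpop P Q t"
  have bound: "real (f y j) \<le> real (fmax n f)" if "s \<le> t" "y \<in># Rpop P Q s" for s y
    using fmax_ge nsga3_run_length[OF assms(4) that(2)] by simp
  have below_ynad: "real (f x j) \<le> ynad f eps P Q ext t j"
    using x bound assms(2) by (rule ynad_bounds(1))
  have width: "ynad f eps P Q ext t j - ymin f P Q t j \<le> real (fmax n f)"
    using x bound assms(2) by (rule ynad_bounds(2))
  show "0 \<le> fnorm f eps P Q ext t x j \<and> fnorm f eps P Q ext t x j \<le> 1 \<and>
        ynad f eps P Q ext t j - ymin f P Q t j \<le> real (fmax n f)"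
    using fnorm_bounds[OF ymin_le[OF x] below_ynad] width by blast
qed

end
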